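(* Let $n\ge2$. For all $x,y\in\mathbb{B}^n$, $$\tfrac14\rho_{\mathbb{B}^n}(x,y)\le\tilde\tau_{\mathbb{B}^n}(x,y)\le\rho_{\mathbb{B}^n}(x,y)\quad\text{and}\quad \tilde\tau_{\mathbb{B}^n}(x,y)\le\tfrac12\rho_{\mathbb{B}^n}(x,y)+\log\tfrac54,$$ and all these inequalities are sharp: $$\inf_{x\ne y}\frac{\tilde\tau_{\mathbb{B}^n}(x,y)}{\rho_{\mathbb{B}^n}(x,y)}=\tfrac14,\qquad \sup_{x\ne y}\frac{\tilde\tau_{\mathbb{B}^n}(x,y)}{\rho_{\mathbb{B}^n}(x,y)}=1,\qquad \sup_{x,y\in\mathbb{B}^n}\Big(\tilde\tau_{\mathbb{B}^n}(x,y)-\tfrac12\rho_{\mathbb{B}^n}(x,y)\Big)=\log\tfrac54.$$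
   Context: $\mathbb{B}^n=\{z\in\mathbb{R}^n:|z|<1\}$. The hyperbolic metric $\rho_{\mathbb{B}^n}$ is given by $\sinh\frac{\rho_{\mathbb{B}^n}(x,y)}{2}=\frac{|x-y|}{\sqrt{1-|x|^2}\sqrt{1-|y|^2}}$. For a proper subdomain $D\subsetneq\mathbb{R}^n$ and $x,y\in D$, $\tilde\tau_D(x,y)=\log\big(1+\sup_{p\in\partial D}\frac{|x-y|}{\sqrt{|x-p||y-p|}}\big)$ (the scale invariant Cassinian metric). *)

theory Defs
  imports "HOL-Analysis.Analysis"
begin

text \<open>Unit ball B^n = ball 0 1 in a Euclidean space of dimension n = DIM('a).\<close>

definition hyp_ball :: "'a::euclidean_space \<Rightarrow> 'a \<Rightarrow> real" where
  "hyp_ball x y = 2 * arsinh (norm (x - y) / (sqrt (1 - (norm x)\<^sup>2) * sqrt (1 - (norm y)\<^sup>2)))"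

definition cass_si :: "'a::euclidean_space set \<Rightarrow> 'a \<Rightarrow> 'a \<Rightarrow> real" where
  "cass_si D x y = ln (1 + (SUP p\<in>frontier D. norm (x - y) / sqrt (norm (x - p) * norm (y - p))))"

end

theory Submission
  imports Defs "HOL-Real_Asymp.Real_Asymp"
begin

text \<open>Write \<open>s\<close> for the supremum in the Cassinian metric, so that \<open>\<tau> = log (1 + s)\<close>, and
  \<open>A = sinh (\<rho> / 2)\<close>, so that \<open>\<rho> = 2 arsinh A = 2 log (A + sqrt (A\<^sup>2 + 1))\<close>.
  For every boundary point \<open>p\<close>, \<open>|x - p| \<ge> 1 - |x| \<ge> (1 - |x|\<^sup>2) / 2\<close>, whence \<open>s \<le> 2A\<close>;
  testing the supremum at \<open>p = x / |x|\<close>, where \<open>|x| \<ge> |y|\<close>, gives \<open>A \<le> s + s\<^sup>2 / 2\<close>.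
  These two comparisons of \<open>s\<close> with \<open>A\<close> yield the three inequalities. Sharpness is witnessed on
  a diameter: by the antipodal pairs \<open>\<plusminus>r e\<close> as \<open>r \<rightarrow> 1\<close>, by points at distances \<open>h\<close> and
  \<open>h + h\<^sup>2\<close> from the boundary point \<open>e\<close> as \<open>h \<rightarrow> 0\<close>, and by points at distances \<open>u\<close> and \<open>4u\<close>
  from \<open>e\<close> as \<open>u \<rightarrow> 0\<close>.\<close>

definition cass_ratio :: "'a::euclidean_space \<Rightarrow> 'a \<Rightarrow> 'a \<Rightarrow> real" where
  "cass_ratio x y p = norm (x - y) / sqrt (norm (x - p) * norm (y - p))"

definition cass_sup :: "'a::euclidean_space \<Rightarrow> 'a \<Rightarrow> real" where
  "cass_sup x y = (SUP p\<in>sphere 0 1. cass_ratio x y p)"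

definition sinh_half_hyp :: "'a::euclidean_space \<Rightarrow> 'a \<Rightarrow> real" where
  "sinh_half_hyp x y = norm (x - y) / (sqrt (1 - (norm x)\<^sup>2) * sqrt (1 - (norm y)\<^sup>2))"

lemma cass_si_unit_ball: "cass_si (ball (0::'a::euclidean_space) 1) x y = ln (1 + cass_sup x y)"
  unfolding cass_si_def cass_sup_def cass_ratio_def by simp

lemma hyp_ball_eq_arsinh: "hyp_ball x y = 2 * arsinh (sinh_half_hyp x y)"
  unfolding hyp_ball_def sinh_half_hyp_def by simp

lemma sinh_half_hyp_commute: "sinh_half_hyp x y = sinh_half_hyp y x"
  unfolding sinh_half_hyp_def by (simp add: norm_minus_commute mult.commute)

lemma cass_sup_commute: "cass_sup x y = cass_sup y x"
  unfolding cass_sup_def cass_ratio_def by (simp add: norm_minus_commute mult.commute)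

lemma one_minus_norm_power2_pos: "norm x < 1 \<Longrightarrow> 0 < 1 - (norm x)\<^sup>2"
  using abs_square_less_1[of "norm x"] by simp

lemma sinh_half_hyp_nonneg: "norm x < 1 \<Longrightarrow> norm y < 1 \<Longrightarrow> 0 \<le> sinh_half_hyp x y"
  using one_minus_norm_power2_pos[of x] one_minus_norm_power2_pos[of y]
  unfolding sinh_half_hyp_def by simp

lemma hyp_ball_pos:
  assumes "norm x < 1" "norm y < 1" "x \<noteq> y"
  shows "0 < hyp_ball x y"
  using assms one_minus_norm_power2_pos[of x] one_minus_norm_power2_pos[of y]
  by (simp add: hyp_ball_eq_arsinh sinh_half_hyp_def)

lemma cass_ratio_nonneg: "0 \<le> cass_ratio x y p"
  unfolding cass_ratio_def by simp

lemma one_minus_norm_power2_le: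
  fixes x p :: "'a::real_normed_vector"
  assumes "norm x \<le> 1" "norm p = 1"
  shows "1 - (norm x)\<^sup>2 \<le> 2 * norm (x - p)"
proof -
  have "1 - (norm x)\<^sup>2 = (1 - norm x) * (1 + norm x)" by (simp add: power2_eq_square algebra_simps)
  also have "\<dots> \<le> (1 - norm x) * 2" using assms(1) by (intro mult_left_mono) auto
  also have "\<dots> \<le> norm (x - p) * 2"
    using norm_triangle_ineq2[of p x] assms(2) by (simp add: norm_minus_commute)
  finally show ?thesis by simp
qed

lemma cass_ratio_le:
  fixes x y p :: "'a::euclidean_space"
  assumes x: "norm x < 1" and y: "norm y < 1" and "norm p = 1"
  shows "cass_ratio x y p \<le> 2 * sinh_half_hyp x y"
proof -
  have "sqrt ((1 - (norm x)\<^sup>2) * (1 - (norm y)\<^sup>2)) \<le> sqrt ((2 * norm (x - p)) * (2 * norm (y - p)))"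
    using one_minus_norm_power2_le[of x p] one_minus_norm_power2_le[of y p] assms
      one_minus_norm_power2_pos[OF x] one_minus_norm_power2_pos[OF y]
    by (intro real_sqrt_le_mono mult_mono) auto
  then have le: "sqrt (1 - (norm x)\<^sup>2) * sqrt (1 - (norm y)\<^sup>2) \<le> 2 * sqrt (norm (x - p) * norm (y - p))"
    by (simp add: real_sqrt_mult)
  have pos: "0 < sqrt (1 - (norm x)\<^sup>2) * sqrt (1 - (norm y)\<^sup>2)"
    using one_minus_norm_power2_pos[OF x] one_minus_norm_power2_pos[OF y] by simp
  have den: "0 < 2 * sqrt (norm (x - p) * norm (y - p)) * (sqrt (1 - (norm x)\<^sup>2) * sqrt (1 - (norm y)\<^sup>2))"
    by (rule mult_pos_pos) (use le pos in linarith)+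
  have "cass_ratio x y p = 2 * norm (x - y) / (2 * sqrt (norm (x - p) * norm (y - p)))"
    by (simp add: cass_ratio_def)
  also have "\<dots> \<le> 2 * norm (x - y) / (sqrt (1 - (norm x)\<^sup>2) * sqrt (1 - (norm y)\<^sup>2))"
    by (rule divide_left_mono[OF le _ den]) simp
  finally show ?thesis by (simp add: sinh_half_hyp_def)
qed

lemma cass_ratio_le_cass_sup:
  fixes x y p :: "'a::euclidean_space"
  assumes "norm x < 1" "norm y < 1" "norm p = 1"
  shows "cass_ratio x y p \<le> cass_sup x y"
  unfolding cass_sup_def using assms cass_ratio_le[OF assms(1,2)]
  by (intro cSUP_upper bdd_aboveI2[where M = "2 * sinh_half_hyp x y"]) auto

lemma cass_sup_le:
  fixes x y :: "'a::euclidean_space"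
  assumes "norm x < 1" "norm y < 1"
  shows "cass_sup x y \<le> 2 * sinh_half_hyp x y"
  unfolding cass_sup_def using cass_ratio_le[OF assms] by (intro cSUP_least) auto

lemma cass_sup_nonneg:
  fixes x y :: "'a::euclidean_space"
  assumes "norm x < 1" "norm y < 1"
  shows "0 \<le> cass_sup x y"
proof -
  obtain p :: 'a where "norm p = 1" using vector_choose_size[of 1] by auto
  then show ?thesis using cass_ratio_le_cass_sup[OF assms] cass_ratio_nonneg order_trans by blast
qed

lemma ln_cass_ratio_le_cass_si:
  fixes x y p :: "'a::euclidean_space"
  assumes "norm x < 1" "norm y < 1" "norm p = 1"
  shows "ln (1 + cass_ratio x y p) \<le> cass_si (ball 0 1) x y"
  unfolding cass_si_unit_ball
  using cass_ratio_le_cass_sup[OF assms] cass_ratio_nonneg[of x y p] by simp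

lemma ln_one_plus_double_le_two_arsinh:
  fixes a :: real
  assumes "0 \<le> a"
  shows "ln (1 + 2 * a) \<le> 2 * arsinh a"
proof -
  define q where "q = sqrt (a\<^sup>2 + 1)"
  have "q\<^sup>2 = a\<^sup>2 + 1" "1 \<le> q" unfolding q_def by simp_all
  moreover have "a \<le> a * q" using \<open>1 \<le> q\<close> assms mult_left_mono[of 1 q a] by simp
  ultimately have "1 + 2 * a \<le> 1 + 2 * (a * q) + 2 * a\<^sup>2"
    using zero_le_power2[of a] by linarith
  also have "\<dots> = (a + q)\<^sup>2"
    using \<open>q\<^sup>2 = a\<^sup>2 + 1\<close> by (simp add: power2_eq_square algebra_simps)
  finally have "1 + 2 * a \<le> (a + q)\<^sup>2" .
  then have "ln (1 + 2 * a) \<le> ln ((a + q)\<^sup>2)" using assms by (intro ln_mono) auto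
  also have "\<dots> = 2 * arsinh a"
    using arsinh_real_aux[of a] by (simp add: arsinh_real_def q_def ln_realpow)
  finally show ?thesis .
qed

lemma ln_one_plus_double_le_arsinh:
  fixes a :: real
  assumes "0 \<le> a"
  shows "ln (1 + 2 * a) \<le> arsinh a + ln (5/4)"
proof -
  have "(4/5 + 3/5 * a)\<^sup>2 \<le> a\<^sup>2 + 1"
    using zero_le_power2[of "4 * a - 3"] by (simp add: power2_eq_square algebra_simps)
  then have "4/5 + 3/5 * a \<le> sqrt (a\<^sup>2 + 1)" by (rule real_le_rsqrt)
  then have "1 + 2 * a \<le> 5/4 * (a + sqrt (a\<^sup>2 + 1))" by simp
  then have "ln (1 + 2 * a) \<le> ln (5/4 * (a + sqrt (a\<^sup>2 + 1)))" using assms by (intro ln_mono) auto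
  also have "\<dots> = ln (5/4) + ln (a + sqrt (a\<^sup>2 + 1))"
    using arsinh_real_aux[of a] by (intro ln_mult_pos) auto
  finally show ?thesis by (simp add: arsinh_real_def)
qed

lemma arsinh_le_two_ln_one_plus:
  fixes s :: real
  assumes "0 \<le> s"
  shows "arsinh (s + s\<^sup>2 / 2) \<le> 2 * ln (1 + s)"
proof -
  define a where "a = s + s\<^sup>2 / 2"
  have "a\<^sup>2 + 1 \<le> (1 + a)\<^sup>2" using assms by (simp add: a_def power2_eq_square algebra_simps)
  then have "sqrt (a\<^sup>2 + 1) \<le> 1 + a" using assms by (intro real_le_lsqrt) (auto simp: a_def)
  then have "a + sqrt (a\<^sup>2 + 1) \<le> (1 + s)\<^sup>2" by (simp add: a_def power2_eq_square algebra_simps)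
  then have "ln (a + sqrt (a\<^sup>2 + 1)) \<le> ln ((1 + s)\<^sup>2)"
    using arsinh_real_aux[of a] by (intro ln_mono) auto
  then show ?thesis using assms by (simp add: a_def arsinh_real_def ln_realpow)
qed

text \<open>For \<open>|y| \<le> |x|\<close> put \<open>a = 1 - |x|\<close>, \<open>b = 1 - |y|\<close>, \<open>d = |x - y|\<close>. Then
  \<open>d / (sqrt (a(2 - a)) sqrt (b(2 - b)))\<close> is \<open>sinh (\<rho>(x, y) / 2)\<close>, and \<open>min (2 - b) (a + d)\<close>
  bounds the distance from \<open>y\<close> to the boundary point \<open>x / |x|\<close>; the next two lemmas treat the
  two values of this minimum.\<close>

lemma sinh_half_hyp_bound_real_far:
  fixes a b d :: real
  assumes a: "0 < a" and ab: "a \<le> b" and b: "b \<le> 1" and d: "0 < d" and far: "2 - b \<le> a + d"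
  shows "2 * (a * (2 - b)) \<le> sqrt (a * (2 - a)) * sqrt (b * (2 - b)) * (2 * sqrt (a * (2 - b)) + d)"
proof -
  define \<sigma> where "\<sigma> = sqrt (a * (2 - b))"
  define \<beta> where "\<beta> = sqrt ((2 - a) * b)"
  have \<sigma>: "0 < \<sigma>" and \<beta>: "0 \<le> \<beta>" using a ab b by (simp_all add: \<sigma>_def \<beta>_def)
  have \<sigma>\<beta>: "\<sigma> \<le> \<beta>" unfolding \<sigma>_def \<beta>_def using a ab by (intro real_sqrt_le_mono) (simp add: algebra_simps)
  have b\<beta>: "b \<le> \<beta>" unfolding \<beta>_def using a ab b
    by (intro real_le_rsqrt) (simp add: power2_eq_square mult_right_mono)
  have "2 * \<sigma> * (1 - \<beta>) \<le> \<beta> * d"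
  proof (cases "\<beta> \<le> 1")
    case True
    have "2 * \<sigma> * (1 - \<beta>) \<le> 2 * \<beta> * (1 - \<beta>)" using \<sigma>\<beta> True by (intro mult_right_mono) auto
    also have "\<dots> \<le> \<beta> * (2 - a - b)" using ab b\<beta> \<beta> mult_left_mono[of "2 * (1 - \<beta>)" "2 - a - b" \<beta>]
      by (simp add: algebra_simps)
    also have "\<dots> \<le> \<beta> * d" using \<beta> far by (intro mult_left_mono) auto
    finally show ?thesis .
  next
    case False
    then have "2 * \<sigma> * (1 - \<beta>) \<le> 0" using \<sigma> by (intro mult_nonneg_nonpos) auto
    then show ?thesis using mult_nonneg_nonneg[of \<beta> d] \<beta> d by linarith
  qed
  then have "\<sigma> * (2 * \<sigma>) \<le> \<sigma> * (\<beta> * (2 * \<sigma> + d))" using \<sigma> by (intro mult_left_mono) (auto simp: algebra_simps)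
  moreover have "sqrt (a * (2 - a)) * sqrt (b * (2 - b)) = \<sigma> * \<beta>"
    by (simp add: \<sigma>_def \<beta>_def real_sqrt_mult[symmetric] algebra_simps)
  moreover have "\<sigma> * \<sigma> = a * (2 - b)" using a b unfolding \<sigma>_def by simp
  ultimately show ?thesis unfolding \<sigma>_def[symmetric] by (simp add: algebra_simps)
qed

lemma sinh_half_hyp_bound_real_near:
  fixes a b d :: real
  assumes a: "0 < a" and ab: "a \<le> b" and b: "b \<le> 1" and d: "0 < d" and near: "a + d \<le> 2 - b"
  shows "2 * (a * (a + d)) \<le> sqrt (a * (2 - a)) * sqrt (b * (2 - b)) * (2 * sqrt (a * (a + d)) + d)"
proof -
  define \<sigma> where "\<sigma> = sqrt (a * (a + d))"
  define c where "c = a + d"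
  define w where "w = 2 - a"
  have cw: "c \<le> w" and ac: "a \<le> c" and aw: "a \<le> w" using near ab b d by (simp_all add: c_def w_def)
  have \<sigma>: "0 < \<sigma>" "\<sigma>\<^sup>2 = a * c" using a d by (simp_all add: \<sigma>_def c_def)
  have "4 * c * w\<^sup>2 - a * (w + c)\<^sup>2
      = a * (c - a) * (w - c) + (4 * w + a) * (w - a) * (c - a) + a * (3 * w + a) * (w - a)"
    by (simp add: w_def power2_eq_square algebra_simps)
  also have "\<dots> \<ge> 0" using a ac cw aw by simp
  finally have "a * (w + c)\<^sup>2 \<le> 4 * c * w\<^sup>2" by simp
  have "(a * (w + c))\<^sup>2 = a * (a * (w + c)\<^sup>2)" by (simp add: power2_eq_square)
  also have "\<dots> \<le> a * (4 * c * w\<^sup>2)" using \<open>a * (w + c)\<^sup>2 \<le> 4 * c * w\<^sup>2\<close> a by (intro mult_left_mono) auto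
  also have "\<dots> = (2 * \<sigma> * w)\<^sup>2" using \<sigma>(2) by (simp add: power_mult_distrib)
  finally have "(a * (w + c))\<^sup>2 \<le> (2 * \<sigma> * w)\<^sup>2" .
  then have "a * (w + c) \<le> 2 * \<sigma> * w" by (rule power2_le_imp_le) (use \<sigma>(1) aw a in auto)
  moreover have "a * (w + c) = 2 * a + a * d" "w * (2 * \<sigma> + d) = 2 * \<sigma> * w + 2 * d - a * d"
    by (simp_all add: c_def w_def algebra_simps)
  ultimately have h: "2 * c \<le> w * (2 * \<sigma> + d)" by (simp add: c_def)
  have "b * (2 - b) - a * (2 - a) = (b - a) * (2 - a - b)" by (simp add: algebra_simps)
  also have "\<dots> \<ge> 0" using ab b a by (intro mult_nonneg_nonneg) auto
  finally have "a * (2 - a) \<le> b * (2 - b)" by simp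
  then have "sqrt (a * (2 - a)) * sqrt (a * (2 - a)) \<le> sqrt (a * (2 - a)) * sqrt (b * (2 - b))"
    using a ab b by (intro mult_left_mono real_sqrt_le_mono) auto
  then have \<alpha>: "a * (2 - a) \<le> sqrt (a * (2 - a)) * sqrt (b * (2 - b))" using a ab b by simp
  have "2 * (a * (a + d)) \<le> a * (w * (2 * \<sigma> + d))" using h a by (simp add: c_def)
  also have "\<dots> = a * (2 - a) * (2 * \<sigma> + d)" by (simp add: w_def)
  also have "\<dots> \<le> sqrt (a * (2 - a)) * sqrt (b * (2 - b)) * (2 * \<sigma> + d)"
    using \<alpha> \<sigma> d by (intro mult_right_mono) auto
  finally show ?thesis unfolding \<sigma>_def .
qed

lemma sinh_half_hyp_bound_real:
  fixes a b d :: real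
  assumes a: "0 < a" and ab: "a \<le> b" and b: "b \<le> 1" and d: "0 < d"
  defines "t \<equiv> d / sqrt (a * min (2 - b) (a + d))"
  shows "d / (sqrt (a * (2 - a)) * sqrt (b * (2 - b))) \<le> t + t\<^sup>2 / 2"
proof -
  define m where "m = min (2 - b) (a + d)"
  define \<sigma> where "\<sigma> = sqrt (a * m)"
  define \<alpha> where "\<alpha> = sqrt (a * (2 - a)) * sqrt (b * (2 - b))"
  have \<sigma>: "0 < \<sigma>" "\<sigma>\<^sup>2 = a * m" using a b d by (auto simp: \<sigma>_def m_def)
  have \<alpha>: "0 < \<alpha>" using a ab b by (simp add: \<alpha>_def)
  have "2 * (a * m) \<le> \<alpha> * (2 * \<sigma> + d)"
    using sinh_half_hyp_bound_real_far[OF a ab b d] sinh_half_hyp_bound_real_near[OF a ab b d]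
    by (cases "2 - b \<le> a + d") (auto simp: m_def \<sigma>_def \<alpha>_def min_def)
  then have "d * (2 * \<sigma>\<^sup>2) \<le> d * (\<alpha> * (2 * \<sigma> + d))" using d \<sigma>(2) by (intro mult_left_mono) auto
  then have "d \<le> \<alpha> * (d * (2 * \<sigma> + d) / (2 * \<sigma>\<^sup>2))" using \<sigma>(1) by (simp add: pos_le_divide_eq algebra_simps)
  then have "d / \<alpha> \<le> d * (2 * \<sigma> + d) / (2 * \<sigma>\<^sup>2)" using \<alpha> by (simp add: pos_divide_le_eq mult.commute)
  also have "\<dots> = d / \<sigma> + (d / \<sigma>)\<^sup>2 / 2" using \<sigma>(1) by (simp add: field_simps power2_eq_square)
  finally show ?thesis by (simp add: t_def \<alpha>_def \<sigma>_def m_def)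
qed

lemma norm_diff_sgn:
  fixes x :: "'a::real_normed_vector"
  assumes "x \<noteq> 0" "norm x \<le> 1"
  shows "norm (x - sgn x) = 1 - norm x"
proof -
  have "x - sgn x = (norm x - 1) *\<^sub>R sgn x"
    using assms(1) by (simp add: sgn_div_norm algebra_simps)
  then show ?thesis using assms by (simp add: norm_sgn)
qed

lemma sinh_half_hyp_le_cass_sup_of_norm_le:
  fixes x y :: "'a::euclidean_space"
  assumes x: "norm x < 1" and y: "norm y < 1" and yx: "norm y \<le> norm x"
  shows "sinh_half_hyp x y \<le> cass_sup x y + (cass_sup x y)\<^sup>2 / 2"
proof (cases "x = y")
  case True
  then show ?thesis using cass_sup_nonneg[OF x y] by (simp add: sinh_half_hyp_def)
next
  case False
  define a b d where "a = 1 - norm x" and "b = 1 - norm y" and "d = norm (x - y)"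
  define t where "t = d / sqrt (a * min (2 - b) (a + d))"
  have "x \<noteq> 0" using False yx by auto
  have a: "0 < a" and ab: "a \<le> b" and b: "b \<le> 1" and d: "0 < d"
    using x yx False by (simp_all add: a_def b_def d_def)
  have p: "norm (sgn x) = 1" using \<open>x \<noteq> 0\<close> by (simp add: norm_sgn)
  have xp: "norm (x - sgn x) = a" using norm_diff_sgn[OF \<open>x \<noteq> 0\<close>] x by (simp add: a_def)
  have "norm (y - sgn x) \<le> norm y + norm (sgn x)" by (rule norm_triangle_ineq4)
  moreover have "norm (y - sgn x) \<le> norm (y - x) + norm (x - sgn x)"
    using norm_triangle_ineq[of "y - x" "x - sgn x"] by simp
  ultimately have yp: "norm (y - sgn x) \<le> min (2 - b) (a + d)"
    using p xp by (simp add: b_def d_def norm_minus_commute)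
  have "y \<noteq> sgn x" using p y by auto
  then have "0 < norm (y - sgn x)" by simp
  then have "t \<le> cass_ratio x y (sgn x)"
    unfolding t_def cass_ratio_def xp d_def[symmetric] using yp a b d
    by (intro divide_left_mono real_sqrt_le_mono mult_left_mono) auto
  also have "\<dots> \<le> cass_sup x y" using cass_ratio_le_cass_sup[OF x y p] .
  finally have ts: "t \<le> cass_sup x y" .
  have t: "0 \<le> t" using a b d by (simp add: t_def)
  have "sinh_half_hyp x y = d / (sqrt (a * (2 - a)) * sqrt (b * (2 - b)))"
    by (simp add: sinh_half_hyp_def a_def b_def d_def power2_eq_square algebra_simps)
  also have "\<dots> \<le> t + t\<^sup>2 / 2" unfolding t_def by (rule sinh_half_hyp_bound_real[OF a ab b d])
  also have "\<dots> \<le> cass_sup x y + (cass_sup x y)\<^sup>2 / 2" using ts t by (simp add: power_mono add_mono)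
  finally show ?thesis .
qed

lemma sinh_half_hyp_le_cass_sup:
  fixes x y :: "'a::euclidean_space"
  assumes "norm x < 1" "norm y < 1"
  shows "sinh_half_hyp x y \<le> cass_sup x y + (cass_sup x y)\<^sup>2 / 2"
  using sinh_half_hyp_le_cass_sup_of_norm_le[OF assms] sinh_half_hyp_le_cass_sup_of_norm_le[OF assms(2,1)]
  by (cases "norm y \<le> norm x") (auto simp: sinh_half_hyp_commute cass_sup_commute)

lemma cass_si_hyp_ball_bounds:
  fixes x y :: "'a::euclidean_space"
  assumes "norm x < 1" "norm y < 1"
  shows "hyp_ball x y / 4 \<le> cass_si (ball 0 1) x y"
    and "cass_si (ball 0 1) x y \<le> hyp_ball x y"
    and "cass_si (ball 0 1) x y \<le> hyp_ball x y / 2 + ln (5/4)"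
proof -
  define s A where "s = cass_sup x y" and "A = sinh_half_hyp x y"
  have s: "0 \<le> s" "s \<le> 2 * A" "A \<le> s + s\<^sup>2 / 2"
    using cass_sup_nonneg[OF assms] cass_sup_le[OF assms] sinh_half_hyp_le_cass_sup[OF assms]
    by (simp_all add: s_def A_def)
  have A: "0 \<le> A" using sinh_half_hyp_nonneg[OF assms] by (simp add: A_def)
  have cass: "cass_si (ball 0 1) x y = ln (1 + s)" and hyp: "hyp_ball x y = 2 * arsinh A"
    by (simp_all add: s_def A_def cass_si_unit_ball hyp_ball_eq_arsinh)
  have "arsinh A \<le> arsinh (s + s\<^sup>2 / 2)" using s by (simp add: not_less[symmetric])
  then show "hyp_ball x y / 4 \<le> cass_si (ball 0 1) x y"
    using arsinh_le_two_ln_one_plus[OF s(1)] by (simp add: cass hyp)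
  have ln_le: "ln (1 + s) \<le> ln (1 + 2 * A)" using s by simp
  then show "cass_si (ball 0 1) x y \<le> hyp_ball x y"
    using ln_one_plus_double_le_two_arsinh[OF A] by (simp add: cass hyp)
  show "cass_si (ball 0 1) x y \<le> hyp_ball x y / 2 + ln (5/4)"
    using ln_le ln_one_plus_double_le_arsinh[OF A] by (simp add: cass hyp)
qed

lemma cInf_eq_tendsto:
  fixes f :: "'b \<Rightarrow> real"
  assumes lower: "\<And>z. z \<in> S \<Longrightarrow> c \<le> z" and lim: "(f \<longlongrightarrow> c) F" and F: "F \<noteq> bot"
    and approx: "\<forall>\<^sub>F t in F. \<exists>z\<in>S. z \<le> f t"
  shows "Inf S = c"
proof (rule cInf_eq_non_empty)
  show "S \<noteq> {}" using eventually_happens'[OF F approx] by blast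
next
  fix w assume w: "\<And>z. z \<in> S \<Longrightarrow> w \<le> z"
  have "\<forall>\<^sub>F t in F. w \<le> f t" using approx by (rule eventually_mono) (use w order_trans in blast)
  then show "w \<le> c" using tendsto_lowerbound[OF lim] F by blast
qed (rule lower)

lemma cSup_eq_tendsto:
  fixes f :: "'b \<Rightarrow> real"
  assumes upper: "\<And>z. z \<in> S \<Longrightarrow> z \<le> c" and lim: "(f \<longlongrightarrow> c) F" and F: "F \<noteq> bot"
    and approx: "\<forall>\<^sub>F t in F. \<exists>z\<in>S. f t \<le> z"
  shows "Sup S = c"
proof (rule cSup_eq_non_empty)
  show "S \<noteq> {}" using eventually_happens'[OF F approx] by blast
next
  fix w assume w: "\<And>z. z \<in> S \<Longrightarrow> z \<le> w"
  have "\<forall>\<^sub>F t in F. f t \<le> w" using approx by (rule eventually_mono) (use w order_trans in blast)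
  then show "c \<le> w" using tendsto_upperbound[OF lim] F by blast
qed (rule upper)

lemma norm_minus_diff_self: "norm (- x - x) = 2 * norm (x::'a::real_normed_vector)"
  by (metis add_uminus_conv_diff minus_add_distrib norm_minus_cancel scaleR_2 norm_scaleR abs_numeral)

lemma cass_sup_antipodal_le:
  fixes x :: "'a::euclidean_space"
  assumes x: "norm x < 1"
  shows "cass_sup (-x) x \<le> 2 * norm x / sqrt (1 - (norm x)\<^sup>2)"
  unfolding cass_sup_def
proof (rule cSUP_least)
  show "sphere (0::'a) 1 \<noteq> {}" by simp
next
  fix p :: 'a assume "p \<in> sphere 0 1"
  then have p: "norm p = 1" by simp
  have n1: "(norm (x - p))\<^sup>2 = 1 + (norm x)\<^sup>2 - 2 * (x \<bullet> p)"
    and n2: "(norm (- x - p))\<^sup>2 = 1 + (norm x)\<^sup>2 + 2 * (x \<bullet> p)"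
    using dot_norm_neg[of x p] dot_norm_neg[of "- x" p] p by simp_all
  have "(norm (- x - p) * norm (x - p))\<^sup>2 = (1 + (norm x)\<^sup>2)\<^sup>2 - 4 * (x \<bullet> p)\<^sup>2"
    unfolding power_mult_distrib n1 n2 by (simp add: power2_eq_square algebra_simps)
  moreover have "(x \<bullet> p)\<^sup>2 \<le> (norm x)\<^sup>2"
    using Cauchy_Schwarz_ineq[of x p] p by (simp add: dot_square_norm)
  ultimately have "(1 - (norm x)\<^sup>2)\<^sup>2 \<le> (norm (- x - p) * norm (x - p))\<^sup>2"
    by (simp add: power2_eq_square algebra_simps)
  then have "1 - (norm x)\<^sup>2 \<le> norm (- x - p) * norm (x - p)" by (rule power2_le_imp_le) simp
  then show "cass_ratio (- x) x p \<le> 2 * norm x / sqrt (1 - (norm x)\<^sup>2)"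
    unfolding cass_ratio_def norm_minus_diff_self using one_minus_norm_power2_pos[OF x]
    by (intro divide_left_mono real_sqrt_le_mono) auto
qed

lemma hyp_ball_antipodal:
  fixes x :: "'a::euclidean_space"
  assumes "norm x < 1"
  shows "hyp_ball (-x) x = 2 * arsinh (2 * norm x / (1 - (norm x)\<^sup>2))"
  using norm_minus_diff_self[of x] one_minus_norm_power2_pos[OF assms]
  by (simp add: hyp_ball_def real_sqrt_mult[symmetric])

lemma cass_si_antipodal_le:
  fixes x :: "'a::euclidean_space"
  assumes "norm x < 1"
  shows "cass_si (ball 0 1) (-x) x \<le> ln (1 + 2 * norm x / sqrt (1 - (norm x)\<^sup>2))"
  using cass_sup_antipodal_le[OF assms] cass_sup_nonneg[of "-x" x] assms
  by (simp add: cass_si_unit_ball)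

lemma hyp_ball_collinear:
  fixes e :: "'a::euclidean_space"
  assumes "norm e = 1"
  shows "hyp_ball (a *\<^sub>R e) (b *\<^sub>R e) = 2 * arsinh (\<bar>a - b\<bar> / (sqrt (1 - a\<^sup>2) * sqrt (1 - b\<^sup>2)))"
  using assms by (simp add: hyp_ball_def flip: scaleR_diff_left)

lemma ln_cass_ratio_collinear_le:
  fixes e :: "'a::euclidean_space"
  assumes e: "norm e = 1" and "\<bar>a\<bar> < 1" "\<bar>b\<bar> < 1"
  shows "ln (1 + \<bar>a - b\<bar> / sqrt (\<bar>a - 1\<bar> * \<bar>b - 1\<bar>)) \<le> cass_si (ball 0 1) (a *\<^sub>R e) (b *\<^sub>R e)"
proof -
  have "c *\<^sub>R e - e = (c - 1) *\<^sub>R e" for c by (simp add: algebra_simps)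
  then have "cass_ratio (a *\<^sub>R e) (b *\<^sub>R e) e = \<bar>a - b\<bar> / sqrt (\<bar>a - 1\<bar> * \<bar>b - 1\<bar>)"
    using e by (simp add: cass_ratio_def flip: scaleR_diff_left)
  then show ?thesis using ln_cass_ratio_le_cass_si[of "a *\<^sub>R e" "b *\<^sub>R e" e] assms by simp
qed

lemma tendsto_antipodal_ratio:
  "((\<lambda>r::real. ln (1 + 2 * r / sqrt (1 - r\<^sup>2)) / (2 * arsinh (2 * r / (1 - r\<^sup>2)))) \<longlongrightarrow> 1/4) (at_left 1)"
  unfolding arsinh_real_def by real_asymp

lemma tendsto_near_boundary_ratio:
  "((\<lambda>h::real. ln (1 + h\<^sup>2 / sqrt (h * (h + h\<^sup>2)))
      / (2 * arsinh (h\<^sup>2 / (sqrt (1 - (1 - h)\<^sup>2) * sqrt (1 - (1 - h - h\<^sup>2)\<^sup>2))))) \<longlongrightarrow> 1) (at_right 0)"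
proof -
  \<comment> \<open>\<open>real_asymp\<close> leaves the leading coefficient as an unevaluated product of roots.\<close>
  have sqrt2: "2 powr (1/2) * 2 powr (1/2) / 2 = (1::real)" by (simp add: powr_half_sqrt)
  show ?thesis unfolding arsinh_real_def by (real_asymp simp add: sqrt2)
qed

lemma tendsto_boundary_gap:
  "((\<lambda>u::real. ln (5/2) - arsinh (3 * u / (sqrt (1 - (1 - u)\<^sup>2) * sqrt (1 - (1 - 4 * u)\<^sup>2))))
      \<longlongrightarrow> ln (5/4)) (at_right 0)"
proof -
  have "(2::real) powr (1/2) * 8 powr (1/2) = 4"
    by (simp add: powr_half_sqrt real_sqrt_mult[symmetric])
  then have sqrt16: "3 * (inverse (2 powr (1/2)) * inverse (8 powr (1/2))) = (3/4::real)"
    by (simp add: inverse_mult_distrib[symmetric])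
  have "((\<lambda>u::real. 3 * u / (sqrt (1 - (1 - u)\<^sup>2) * sqrt (1 - (1 - 4 * u)\<^sup>2))) \<longlongrightarrow> 3/4) (at_right 0)"
    by (real_asymp simp add: sqrt16)
  then have "((\<lambda>u::real. ln (5/2) - arsinh (3 * u / (sqrt (1 - (1 - u)\<^sup>2) * sqrt (1 - (1 - 4 * u)\<^sup>2))))
      \<longlongrightarrow> ln (5/2) - arsinh (3/4)) (at_right 0)"
    by (intro tendsto_diff tendsto_const tendsto_arsinh)
  moreover have "sqrt ((3/4::real)\<^sup>2 + 1) = 5/4" by (rule real_sqrt_unique) (auto simp: power2_eq_square)
  then have "ln (5/2) - arsinh (3/4) = ln (5/4::real)"
    using ln_div[of "5/2" 2] by (simp add: arsinh_real_def)
  ultimately show ?thesis by simp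
qed

lemma Inf_cass_si_div_hyp_ball:
  "Inf {cass_si (ball 0 1) x y / hyp_ball x y | x y :: 'a::euclidean_space.
      x \<in> ball 0 1 \<and> y \<in> ball 0 1 \<and> x \<noteq> y} = 1/4" (is "Inf ?R = _")
proof (rule cInf_eq_tendsto[OF _ tendsto_antipodal_ratio])
  fix z assume "z \<in> ?R"
  then obtain x y :: 'a where z: "z = cass_si (ball 0 1) x y / hyp_ball x y"
    and xy: "norm x < 1" "norm y < 1" "x \<noteq> y" by auto
  then show "1/4 \<le> z"
    using cass_si_hyp_ball_bounds(1)[OF xy(1,2)] hyp_ball_pos[OF xy] by (simp add: le_divide_eq)
next
  obtain e :: 'a where e: "norm e = 1" using vector_choose_size[of 1] by auto
  show "\<forall>\<^sub>F r in at_left 1. \<exists>z\<in>?R. z \<le> ln (1 + 2 * r / sqrt (1 - r\<^sup>2)) / (2 * arsinh (2 * r / (1 - r\<^sup>2)))"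
    using eventually_at_left_real[OF zero_less_one]
  proof (rule eventually_mono)
    fix r :: real assume "r \<in> {0<..<1}"
    then have x: "norm (r *\<^sub>R e) = r" "norm (r *\<^sub>R e) < 1" "- (r *\<^sub>R e) \<noteq> r *\<^sub>R e"
      using e norm_minus_diff_self[of "r *\<^sub>R e"] by auto
    have hyp: "hyp_ball (- (r *\<^sub>R e)) (r *\<^sub>R e) = 2 * arsinh (2 * r / (1 - r\<^sup>2))"
      using hyp_ball_antipodal[OF x(2)] x(1) by simp
    have "cass_si (ball 0 1) (- (r *\<^sub>R e)) (r *\<^sub>R e) \<le> ln (1 + 2 * r / sqrt (1 - r\<^sup>2))"
      using cass_si_antipodal_le[OF x(2)] x(1) by simp
    then have "cass_si (ball 0 1) (- (r *\<^sub>R e)) (r *\<^sub>R e) / hyp_ball (- (r *\<^sub>R e)) (r *\<^sub>R e)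
        \<le> ln (1 + 2 * r / sqrt (1 - r\<^sup>2)) / (2 * arsinh (2 * r / (1 - r\<^sup>2)))"
      using hyp_ball_pos[of "- (r *\<^sub>R e)" "r *\<^sub>R e"] x unfolding hyp
      by (intro divide_right_mono) (auto intro: less_imp_le)
    with x show "\<exists>z\<in>?R. z \<le> ln (1 + 2 * r / sqrt (1 - r\<^sup>2)) / (2 * arsinh (2 * r / (1 - r\<^sup>2)))"
      by fastforce
  qed
qed simp

lemma Sup_cass_si_div_hyp_ball:
  "Sup {cass_si (ball 0 1) x y / hyp_ball x y | x y :: 'a::euclidean_space.
      x \<in> ball 0 1 \<and> y \<in> ball 0 1 \<and> x \<noteq> y} = 1" (is "Sup ?R = _")
proof (rule cSup_eq_tendsto[OF _ tendsto_near_boundary_ratio])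
  fix z assume "z \<in> ?R"
  then obtain x y :: 'a where z: "z = cass_si (ball 0 1) x y / hyp_ball x y"
    and xy: "norm x < 1" "norm y < 1" "x \<noteq> y" by auto
  then show "z \<le> 1" using cass_si_hyp_ball_bounds(2)[OF xy(1,2)] hyp_ball_pos[OF xy] by simp
next
  obtain e :: 'a where e: "norm e = 1" using vector_choose_size[of 1] by auto
  show "\<forall>\<^sub>F h in at_right 0. \<exists>z\<in>?R. ln (1 + h\<^sup>2 / sqrt (h * (h + h\<^sup>2)))
      / (2 * arsinh (h\<^sup>2 / (sqrt (1 - (1 - h)\<^sup>2) * sqrt (1 - (1 - h - h\<^sup>2)\<^sup>2)))) \<le> z"
    using eventually_at_right_real[of 0 "1/2::real"]
  proof (rule eventually_mono)
    fix h :: real assume "h \<in> {0<..<1/2}"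
    then have h: "0 < h" "0 < h\<^sup>2" "h\<^sup>2 < h" "h < 1/2" by (auto simp: power2_eq_square)
    define x y where "x = (1 - h) *\<^sub>R e" and "y = (1 - h - h\<^sup>2) *\<^sub>R e"
    have ab: "\<bar>1 - h\<bar> < 1" "\<bar>1 - h - h\<^sup>2\<bar> < 1" "\<bar>(1 - h) - (1 - h - h\<^sup>2)\<bar> = h\<^sup>2"
      "\<bar>(1 - h) - 1\<bar> = h" "\<bar>(1 - h - h\<^sup>2) - 1\<bar> = h + h\<^sup>2"
      using h by arith+
    have xy: "norm x < 1" "norm y < 1" "x \<noteq> y" using e ab(1,2) h(2) by (auto simp: x_def y_def)
    have "ln (1 + h\<^sup>2 / sqrt (h * (h + h\<^sup>2))) \<le> cass_si (ball 0 1) x y"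
      using ln_cass_ratio_collinear_le[OF e ab(1,2)] unfolding ab(3-5) by (simp add: x_def y_def)
    then have "ln (1 + h\<^sup>2 / sqrt (h * (h + h\<^sup>2))) / hyp_ball x y \<le> cass_si (ball 0 1) x y / hyp_ball x y"
      using hyp_ball_pos[OF xy] by (intro divide_right_mono) auto
    moreover have hyp: "hyp_ball x y
        = 2 * arsinh (h\<^sup>2 / (sqrt (1 - (1 - h)\<^sup>2) * sqrt (1 - (1 - h - h\<^sup>2)\<^sup>2)))"
      using hyp_ball_collinear[OF e] ab(3) by (simp add: x_def y_def)
    ultimately show "\<exists>z\<in>?R. ln (1 + h\<^sup>2 / sqrt (h * (h + h\<^sup>2)))
        / (2 * arsinh (h\<^sup>2 / (sqrt (1 - (1 - h)\<^sup>2) * sqrt (1 - (1 - h - h\<^sup>2)\<^sup>2)))) \<le> z"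
      unfolding hyp[symmetric] using xy by fastforce
  qed simp
qed simp

lemma Sup_cass_si_minus_half_hyp_ball:
  "Sup {cass_si (ball 0 1) x y - hyp_ball x y / 2 | x y :: 'a::euclidean_space.
      x \<in> ball 0 1 \<and> y \<in> ball 0 1} = ln (5/4)" (is "Sup ?D = _")
proof (rule cSup_eq_tendsto[OF _ tendsto_boundary_gap])
  fix z assume "z \<in> ?D"
  then show "z \<le> ln (5/4)" using cass_si_hyp_ball_bounds(3) by fastforce
next
  obtain e :: 'a where e: "norm e = 1" using vector_choose_size[of 1] by auto
  show "\<forall>\<^sub>F u in at_right 0. \<exists>z\<in>?D.
      ln (5/2) - arsinh (3 * u / (sqrt (1 - (1 - u)\<^sup>2) * sqrt (1 - (1 - 4 * u)\<^sup>2))) \<le> z"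
    using eventually_at_right_real[of 0 "1/4::real"]
  proof (rule eventually_mono)
    fix u :: real assume "u \<in> {0<..<1/4}"
    then have ab: "\<bar>1 - u\<bar> < 1" "\<bar>1 - 4 * u\<bar> < 1" "\<bar>(1 - u) - (1 - 4 * u)\<bar> = 3 * u"
      and u: "0 < u" by auto
    have "sqrt (\<bar>(1 - u) - 1\<bar> * \<bar>(1 - 4 * u) - 1\<bar>) = 2 * u"
      by (rule real_sqrt_unique) (use u in \<open>auto simp: power2_eq_square\<close>)
    then have ratio: "\<bar>(1 - u) - (1 - 4 * u)\<bar> / sqrt (\<bar>(1 - u) - 1\<bar> * \<bar>(1 - 4 * u) - 1\<bar>) = 3/2"
      using ab(3) u by simp
    define x y where "x = (1 - u) *\<^sub>R e" and "y = (1 - 4 * u) *\<^sub>R e"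
    have xy: "norm x < 1" "norm y < 1" using e ab(1,2) by (simp_all add: x_def y_def)
    have "ln (5/2) \<le> cass_si (ball 0 1) x y"
      using ln_cass_ratio_collinear_le[OF e ab(1,2)] unfolding ratio by (simp add: x_def y_def)
    moreover have "hyp_ball x y = 2 * arsinh (3 * u / (sqrt (1 - (1 - u)\<^sup>2) * sqrt (1 - (1 - 4 * u)\<^sup>2)))"
      using hyp_ball_collinear[OF e] ab(3) by (simp add: x_def y_def)
    ultimately show "\<exists>z\<in>?D. ln (5/2) - arsinh (3 * u / (sqrt (1 - (1 - u)\<^sup>2) * sqrt (1 - (1 - 4 * u)\<^sup>2))) \<le> z"
      using xy by fastforce
  qed simp
qed simp

theorem theorem4p1:
  assumes "DIM('a::euclidean_space) \<ge> 2"
  shows "(\<forall>x\<in>ball (0::'a) 1. \<forall>y\<in>ball 0 1.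
            hyp_ball x y / 4 \<le> cass_si (ball 0 1) x y \<and>
            cass_si (ball 0 1) x y \<le> hyp_ball x y \<and>
            cass_si (ball 0 1) x y \<le> hyp_ball x y / 2 + ln (5/4))
       \<and> Inf {cass_si (ball 0 1) x y / hyp_ball x y | x y :: 'a. x \<in> ball 0 1 \<and> y \<in> ball 0 1 \<and> x \<noteq> y} = 1/4
       \<and> Sup {cass_si (ball 0 1) x y / hyp_ball x y | x y :: 'a. x \<in> ball 0 1 \<and> y \<in> ball 0 1 \<and> x \<noteq> y} = 1
       \<and> Sup {cass_si (ball 0 1) x y - hyp_ball x y / 2 | x y :: 'a. x \<in> ball 0 1 \<and> y \<in> ball 0 1} = ln (5/4)"
  using cass_si_hyp_ball_bounds Inf_cass_si_div_hyp_ball Sup_cass_si_div_hyp_ball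
    Sup_cass_si_minus_half_hyp_ball
  by auto

end
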